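(* Let $G$ be a connected graph. (i) For any $R\subseteq V(G)$: if $v_1v_2\cdots v_kv_1$ ($k\geq 3$) is a cycle in $G_R$ and some edge of this cycle belongs to $\mathcal{U}_R(r)$ for some $r\in R$, then at least two edges of this cycle belong to $\mathcal{U}_R(r)$. (ii) Let $R$ be a resolving set of $G$ and $r\in R$, and let $x,y,z\in V(G)$ be distinct. If $\{x,y\}\in\mathcal{U}_R(r)$ and $\{x,z\}\in\mathcal{U}_R(r)$, then $\{y,z\}\in\mathcal{U}_R(r)$. (iii) If $b$ is a basis forced vertex of $G$ and $R$ is a metric basis of $G$, then $|\mathcal{U}_R(b)|\geq 2$. (iv) If $b$ is a basis forced vertex of $G$ and $R$ is a metric basis of $G$, then there exist $x,y\in V(G)\setminus R$ with $\{x,y\}\in\mathcal{U}_R(b)$.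
   Context: All graphs are finite and simple. For vertices $u,v$ of a connected graph $G$, $d(u,v)$ is the length of a shortest $u$–$v$ path. A set $R\subseteq V(G)$ is a resolving set if for all distinct $x,y\in V(G)$ there is $r\in R$ with $d(r,x)\neq d(r,y)$; a resolving set of minimum cardinality is a metric basis; a vertex is a basis forced vertex if it belongs to every metric basis. For $R\subseteq V(G)$ and $r\in R$, $\mathcal{U}_R(r)$ is the set of unordered pairs $\{x,y\}$ of vertices of $G$ such that $d(r,x)\neq d(r,y)$ and $d(t,x)=d(t,y)$ for all $t\in R\setminus\{r\}$ (pairs resolved by $r$ and by no other element of $R$). The colour graph $G_R$ has vertex set $V(G)$ and edge set $\bigcup_{r\in R}\mathcal{U}_R(r)$; the edges in $\mathcal{U}_R(r)$ are said to have the colour associated with $r$ (these sets are pairwise disjoint). *)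

theory Defs
  imports Main
begin

definition simple_graph :: "'a set \<Rightarrow> ('a \<Rightarrow> 'a \<Rightarrow> bool) \<Rightarrow> bool" where
  "simple_graph V E \<longleftrightarrow> finite V \<and> V \<noteq> {} \<and>
     (\<forall>u v. E u v \<longrightarrow> u \<in> V \<and> v \<in> V) \<and>
     (\<forall>u v. E u v \<longrightarrow> E v u) \<and> (\<forall>u. \<not> E u u)"

fun walk :: "('a \<Rightarrow> 'a \<Rightarrow> bool) \<Rightarrow> 'a list \<Rightarrow> bool" where
  "walk E [] = False"
| "walk E [x] = True"
| "walk E (x # y # xs) = (E x y \<and> walk E (y # xs))"

definition walk_of_length :: "'a set \<Rightarrow> ('a \<Rightarrow> 'a \<Rightarrow> bool) \<Rightarrow> 'a \<Rightarrow> 'a \<Rightarrow> nat \<Rightarrow> bool" where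
  "walk_of_length V E u v n \<longleftrightarrow>
     (\<exists>xs. walk E xs \<and> set xs \<subseteq> V \<and> hd xs = u \<and> last xs = v \<and> length xs = Suc n)"

definition connected_graph :: "'a set \<Rightarrow> ('a \<Rightarrow> 'a \<Rightarrow> bool) \<Rightarrow> bool" where
  "connected_graph V E \<longleftrightarrow> simple_graph V E \<and>
     (\<forall>u\<in>V. \<forall>v\<in>V. \<exists>n. walk_of_length V E u v n)"

definition gdist :: "'a set \<Rightarrow> ('a \<Rightarrow> 'a \<Rightarrow> bool) \<Rightarrow> 'a \<Rightarrow> 'a \<Rightarrow> nat" where
  "gdist V E u v = (LEAST n. walk_of_length V E u v n)"

definition resolving_set :: "'a set \<Rightarrow> ('a \<Rightarrow> 'a \<Rightarrow> bool) \<Rightarrow> 'a set \<Rightarrow> bool" where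
  "resolving_set V E R \<longleftrightarrow> R \<subseteq> V \<and>
     (\<forall>x\<in>V. \<forall>y\<in>V. x \<noteq> y \<longrightarrow> (\<exists>r\<in>R. gdist V E r x \<noteq> gdist V E r y))"

definition metric_basis :: "'a set \<Rightarrow> ('a \<Rightarrow> 'a \<Rightarrow> bool) \<Rightarrow> 'a set \<Rightarrow> bool" where
  "metric_basis V E R \<longleftrightarrow> resolving_set V E R \<and>
     (\<forall>S. resolving_set V E S \<longrightarrow> card R \<le> card S)"

definition basis_forced :: "'a set \<Rightarrow> ('a \<Rightarrow> 'a \<Rightarrow> bool) \<Rightarrow> 'a \<Rightarrow> bool" where
  "basis_forced V E b \<longleftrightarrow> b \<in> V \<and> (\<forall>R. metric_basis V E R \<longrightarrow> b \<in> R)"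

text \<open>U_R(r): unordered pairs (2-element sets) resolved by r and by no other element of R.\<close>
definition uniq_resolved :: "'a set \<Rightarrow> ('a \<Rightarrow> 'a \<Rightarrow> bool) \<Rightarrow> 'a set \<Rightarrow> 'a \<Rightarrow> 'a set set" where
  "uniq_resolved V E R r = {{x, y} | x y. x \<in> V \<and> y \<in> V \<and>
      gdist V E r x \<noteq> gdist V E r y \<and>
      (\<forall>t\<in>R - {r}. gdist V E t x = gdist V E t y)}"

definition colour_edges :: "'a set \<Rightarrow> ('a \<Rightarrow> 'a \<Rightarrow> bool) \<Rightarrow> 'a set \<Rightarrow> 'a set set" where
  "colour_edges V E R = (\<Union>r\<in>R. uniq_resolved V E R r)"

text \<open>The list vs = [v_1,...,v_k] (k >= 3, distinct vertices) is a cycle v_1 ... v_k v_1 in G_R.\<close>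
definition colour_cycle :: "'a set \<Rightarrow> ('a \<Rightarrow> 'a \<Rightarrow> bool) \<Rightarrow> 'a set \<Rightarrow> 'a list \<Rightarrow> bool" where
  "colour_cycle V E R vs \<longleftrightarrow> length vs \<ge> 3 \<and> distinct vs \<and> set vs \<subseteq> V \<and>
     (\<forall>i < length vs. {vs ! i, vs ! ((i + 1) mod length vs)} \<in> colour_edges V E R)"

end

(* A landmark t of R is constant along every edge of G_R that it does not colour. Going once
   around a cycle of G_R, a landmark r that colours exactly one edge would therefore take
   the same value at both ends of that edge, which r resolves: contradiction, so (i).
   For (ii), the pair {y, z} is not resolved by R - {r}, so r must resolve it.
   For (iii), R - {b} resolves every pair outside U_R(b), and a pair {x, y} is resolved by x
   itself; if U_R(b) had at most one pair, then dropping b, or replacing it by an endpoint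
   of that pair other than b, would give a metric basis without b.
   For (iv), two pairs of U_R(b) through b yield, by (ii), one avoiding b, and a landmark
   t <> b never lies in a pair of U_R(b), since t resolves every pair containing it. *)
theory Submission
  imports Defs
begin

lemma gdist_self: "x \<in> V \<Longrightarrow> gdist V E x x = 0"
  unfolding gdist_def walk_of_length_def
  by (rule Least_eq_0, rule exI[of _ "[x]"], auto)

lemma gdist_eq_0_iff:
  assumes "connected_graph V E" "x \<in> V" "y \<in> V"
  shows "gdist V E x y = 0 \<longleftrightarrow> x = y"
proof
  assume dist0: "gdist V E x y = 0"
  obtain n where "walk_of_length V E x y n"
    using assms unfolding connected_graph_def by blast
  then have "walk_of_length V E x y (gdist V E x y)"
    unfolding gdist_def by (rule LeastI)
  then obtain xs where "hd xs = x" "last xs = y" "length xs = 1"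
    using dist0 unfolding walk_of_length_def by auto
  then show "x = y"
    by (cases xs) auto
qed (use assms gdist_self in simp)

lemma gdist_self_neq:
  assumes "connected_graph V E" "u \<in> V" "v \<in> V" "u \<noteq> v"
  shows "gdist V E u u \<noteq> gdist V E u v"
  using assms gdist_self[of u V E] gdist_eq_0_iff[of V E u v] by simp

lemma uniq_resolved_doubleton_iff:
  "{a, b} \<in> uniq_resolved V E R r \<longleftrightarrow>
     a \<in> V \<and> b \<in> V \<and> gdist V E r a \<noteq> gdist V E r b \<and>
     (\<forall>t\<in>R - {r}. gdist V E t a = gdist V E t b)"
proof
  assume "{a, b} \<in> uniq_resolved V E R r"
  then obtain x y where "{a, b} = {x, y}" "x \<in> V" "y \<in> V" "gdist V E r x \<noteq> gdist V E r y"
      "\<forall>t\<in>R - {r}. gdist V E t x = gdist V E t y"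
    unfolding uniq_resolved_def by blast
  then show "a \<in> V \<and> b \<in> V \<and> gdist V E r a \<noteq> gdist V E r b \<and>
     (\<forall>t\<in>R - {r}. gdist V E t a = gdist V E t b)"
    by (auto simp: doubleton_eq_iff) (metis Diff_iff singletonD)
qed (auto simp: uniq_resolved_def)

lemma uniq_resolvedE:
  assumes "p \<in> uniq_resolved V E R r"
  obtains x y where "p = {x, y}" "x \<noteq> y"
  using assms unfolding uniq_resolved_def by blast

lemma finite_uniq_resolved: "finite V \<Longrightarrow> finite (uniq_resolved V E R r)"
  by (rule finite_subset[of _ "Pow V"]) (auto simp: uniq_resolved_def)

lemma colour_edge_gdist_eq:
  assumes "{a, b} \<in> colour_edges V E R" "r \<in> R" "{a, b} \<notin> uniq_resolved V E R r"
  shows "gdist V E r a = gdist V E r b"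
proof -
  obtain s where "s \<in> R" "{a, b} \<in> uniq_resolved V E R s"
    using assms(1) unfolding colour_edges_def by blast
  with assms(2,3) show ?thesis
    by (auto simp: uniq_resolved_doubleton_iff)
qed

lemma add_mod_neq:
  fixes j k m :: nat
  assumes "j < k" "0 < m" "m < k"
  shows "(j + m) mod k \<noteq> j"
proof
  assume "(j + m) mod k = j"
  then have "(j + m) mod k = j mod k"
    using assms(1) by simp
  then have "k dvd m"
    using mod_eq_dvd_iff_nat[of j "j + m" k] by simp
  with assms(2,3) show False
    by (auto dest: dvd_imp_le)
qed

lemma cyclic_step_eq_all_but_one:
  fixes g :: "nat \<Rightarrow> 'b"
  assumes "j < k" and steps: "\<forall>i<k. i \<noteq> j \<longrightarrow> g i = g ((i + 1) mod k)"
  shows "g j = g ((j + 1) mod k)"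
proof -
  have "g ((j + 1 + n) mod k) = g ((j + 1) mod k)" if "n < k" for n
    using that
  proof (induction n)
    case (Suc n)
    let ?i = "(j + 1 + n) mod k"
    have "?i \<noteq> j"
      using add_mod_neq[of j k "Suc n"] \<open>j < k\<close> Suc.prems by simp
    then have "g ?i = g ((?i + 1) mod k)"
      using steps \<open>j < k\<close> by simp
    also have "(?i + 1) mod k = (j + 1 + Suc n) mod k"
      by (simp add: mod_Suc_eq)
    finally show ?case
      using Suc by simp
  qed simp
  from this[of "k - 1"] \<open>j < k\<close> show ?thesis
    by simp
qed

lemma colour_cycle_uniq_resolved_edges:
  assumes cycle: "colour_cycle V E R vs" and "r \<in> R" "j < length vs"
    and edge_j: "{vs ! j, vs ! ((j + 1) mod length vs)} \<in> uniq_resolved V E R r"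
  shows "card {i. i < length vs \<and> {vs ! i, vs ! ((i + 1) mod length vs)} \<in> uniq_resolved V E R r} \<ge> 2"
    (is "card ?S \<ge> 2")
proof -
  have "\<exists>i\<in>?S. i \<noteq> j"
  proof (rule ccontr)
    assume "\<not> ?thesis"
    then have "gdist V E r (vs ! i) = gdist V E r (vs ! ((i + 1) mod length vs))"
      if "i < length vs" "i \<noteq> j" for i
      using cycle that \<open>r \<in> R\<close> unfolding colour_cycle_def
      by (intro colour_edge_gdist_eq) auto
    then have "gdist V E r (vs ! j) = gdist V E r (vs ! ((j + 1) mod length vs))"
      using cyclic_step_eq_all_but_one[of j "length vs" "\<lambda>i. gdist V E r (vs ! i)"]
        \<open>j < length vs\<close> by blast
    with edge_j show False
      by (simp add: uniq_resolved_doubleton_iff)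
  qed
  then obtain i where "i \<in> ?S" "i \<noteq> j"
    by blast
  moreover have "j \<in> ?S"
    using \<open>j < length vs\<close> edge_j by simp
  ultimately have "card {i, j} \<le> card ?S"
    by (intro card_mono) auto
  with \<open>i \<noteq> j\<close> show ?thesis
    by simp
qed

lemma uniq_resolved_triangle:
  assumes "resolving_set V E R" "y \<noteq> z"
    and "{x, y} \<in> uniq_resolved V E R r" "{x, z} \<in> uniq_resolved V E R r"
  shows "{y, z} \<in> uniq_resolved V E R r"
proof -
  have yz: "y \<in> V" "z \<in> V" and others: "\<forall>t\<in>R - {r}. gdist V E t y = gdist V E t z"
    using assms(3,4) by (auto simp: uniq_resolved_doubleton_iff)
  have "gdist V E r y \<noteq> gdist V E r z"
  proof
    assume "gdist V E r y = gdist V E r z"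
    with others have "\<forall>t\<in>R. gdist V E t y = gdist V E t z"
      by (metis Diff_iff singletonD)
    with assms(1,2) yz show False
      unfolding resolving_set_def by blast
  qed
  with yz others show ?thesis
    by (simp add: uniq_resolved_doubleton_iff)
qed

lemma uniq_resolved_landmark_eq:
  assumes "connected_graph V E" "{u, v} \<in> uniq_resolved V E R r" "u \<in> R"
  shows "u = r"
proof (rule ccontr)
  assume "u \<noteq> r"
  with assms(2,3) have "gdist V E u u = gdist V E u v" "u \<noteq> v" "u \<in> V" "v \<in> V"
    by (auto simp: uniq_resolved_doubleton_iff)
  with assms(1) show False
    using gdist_self_neq by metis
qed

lemma resolving_set_exchange:
  assumes "connected_graph V E" "resolving_set V E R" "W \<subseteq> V"
    and meets: "\<forall>p\<in>uniq_resolved V E R b. p \<inter> W \<noteq> {}"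
  shows "resolving_set V E (W \<union> (R - {b}))"
  unfolding resolving_set_def
proof (intro conjI ballI impI)
  show "W \<union> (R - {b}) \<subseteq> V"
    using assms(2,3) unfolding resolving_set_def by blast
next
  fix u v assume uv: "u \<in> V" "v \<in> V" "u \<noteq> v"
  show "\<exists>t\<in>W \<union> (R - {b}). gdist V E t u \<noteq> gdist V E t v"
  proof (cases "{u, v} \<in> uniq_resolved V E R b")
    case True
    with meets have "{u, v} \<inter> W \<noteq> {}"
      by (rule bspec)
    then obtain w where "w \<in> W" "w = u \<or> w = v"
      by auto
    then have "gdist V E w u \<noteq> gdist V E w v"
      using gdist_self_neq[OF assms(1)] uv by (metis (full_types))
    with \<open>w \<in> W\<close> show ?thesis
      by blast
  next
    case False
    obtain t where "t \<in> R" "gdist V E t u \<noteq> gdist V E t v"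
      using assms(2) uv unfolding resolving_set_def by blast
    moreover have "\<exists>t\<in>R - {b}. gdist V E t u \<noteq> gdist V E t v" if "gdist V E b u \<noteq> gdist V E b v"
      using False uv that by (simp add: uniq_resolved_doubleton_iff)
    ultimately show ?thesis
      by (cases "t = b") auto
  qed
qed

lemma uniq_resolved_small_transversal:
  assumes "finite (uniq_resolved V E R b)" "card (uniq_resolved V E R b) \<le> 1"
  obtains W where "W \<subseteq> V - {b}" "card W \<le> 1" "\<forall>p\<in>uniq_resolved V E R b. p \<inter> W \<noteq> {}"
proof (cases "uniq_resolved V E R b = {}")
  case True
  then show ?thesis
    using that[of "{}"] by simp
next
  case False
  with assms have "card (uniq_resolved V E R b) = 1"
    using card_0_eq[OF assms(1)] by linarith
  then obtain p where U: "uniq_resolved V E R b = {p}"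
    by (rule card_1_singletonE)
  then obtain x y where p: "p = {x, y}" "x \<noteq> y"
    by (metis insertI1 uniq_resolvedE)
  have "{x, y} \<in> uniq_resolved V E R b"
    using U p by simp
  then have "x \<in> V" "y \<in> V"
    by (simp_all add: uniq_resolved_doubleton_iff)
  with p obtain w where "w \<in> p - {b}" "w \<in> V"
    by blast
  then show ?thesis
    using that[of "{w}"] U by auto
qed

lemma basis_forced_mem_resolving_set:
  assumes "basis_forced V E b" "metric_basis V E R" "resolving_set V E S" "card S \<le> card R"
  shows "b \<in> S"
proof -
  have "metric_basis V E S"
    using assms(2-4) unfolding metric_basis_def by fastforce
  with assms(1) show ?thesis
    unfolding basis_forced_def by blast
qed

lemma basis_forced_card_uniq_resolved:
  assumes conn: "connected_graph V E" and forced: "basis_forced V E b"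
    and basis: "metric_basis V E R"
  shows "card (uniq_resolved V E R b) \<ge> 2"
proof (rule ccontr)
  let ?U = "uniq_resolved V E R b"
  assume "\<not> ?thesis"
  have resolving: "resolving_set V E R"
    using basis unfolding metric_basis_def by blast
  have "finite V"
    using conn unfolding connected_graph_def simple_graph_def by blast
  then have "finite R" "finite ?U"
    using resolving finite_uniq_resolved unfolding resolving_set_def
    by (auto intro: finite_subset)
  have "b \<in> R"
    using forced basis unfolding basis_forced_def by blast
  have "card ?U \<le> 1"
    using \<open>\<not> card ?U \<ge> 2\<close> by simp
  then obtain W where W: "W \<subseteq> V - {b}" "card W \<le> 1" "\<forall>p\<in>?U. p \<inter> W \<noteq> {}"
    by (rule uniq_resolved_small_transversal[OF \<open>finite ?U\<close>])
  let ?S = "W \<union> (R - {b})"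
  have "resolving_set V E ?S"
    using resolving_set_exchange[OF conn resolving] W by blast
  moreover have "card ?S \<le> card R"
  proof -
    have "card ?S \<le> card W + card (R - {b})"
      by (rule card_Un_le)
    also have "\<dots> \<le> card R"
      using W(2) \<open>finite R\<close> \<open>b \<in> R\<close> card_Diff1_less[of R b] by simp
    finally show ?thesis .
  qed
  ultimately have "b \<in> ?S"
    by (rule basis_forced_mem_resolving_set[OF forced basis])
  with W(1) show False
    by blast
qed

lemma uniq_resolved_pair_avoiding:
  assumes resolving: "resolving_set V E R" and "card (uniq_resolved V E R r) \<ge> 2"
  shows "\<exists>x y. x \<noteq> r \<and> y \<noteq> r \<and> {x, y} \<in> uniq_resolved V E R r"
proof (rule ccontr)
  let ?U = "uniq_resolved V E R r"
  assume avoid: "\<not> ?thesis"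
  have through_r: "\<exists>c. c \<noteq> r \<and> p = {r, c}" if p_in: "p \<in> ?U" for p
  proof -
    obtain x y where p: "p = {x, y}" "x \<noteq> y"
      using p_in by (rule uniq_resolvedE)
    with p_in avoid have "x = r \<or> y = r"
      by blast
    with p show ?thesis
      by (metis insert_commute)
  qed
  obtain p q where "p \<in> ?U" "q \<in> ?U" "p \<noteq> q"
    using \<open>card ?U \<ge> 2\<close> by (auto simp: numeral_2_eq_2 card_le_Suc_iff)
  moreover obtain c d where "c \<noteq> r" "p = {r, c}" "d \<noteq> r" "q = {r, d}"
    using through_r \<open>p \<in> ?U\<close> \<open>q \<in> ?U\<close> by blast
  ultimately have "{c, d} \<in> ?U"
    using uniq_resolved_triangle[OF resolving, of c d r r] by auto
  with avoid \<open>c \<noteq> r\<close> \<open>d \<noteq> r\<close> show False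
    by blast
qed

lemma basis_forced_uniq_resolved_outside_basis:
  assumes conn: "connected_graph V E" and "basis_forced V E b" "metric_basis V E R"
  shows "\<exists>x \<in> V - R. \<exists>y \<in> V - R. {x, y} \<in> uniq_resolved V E R b"
proof -
  have "resolving_set V E R"
    using assms(3) unfolding metric_basis_def by blast
  moreover have "card (uniq_resolved V E R b) \<ge> 2"
    using basis_forced_card_uniq_resolved[OF assms] .
  ultimately obtain x y where "x \<noteq> b" "y \<noteq> b" and xy: "{x, y} \<in> uniq_resolved V E R b"
    using uniq_resolved_pair_avoiding[of V E R b] by blast
  moreover have "{y, x} \<in> uniq_resolved V E R b"
    using xy by (simp add: insert_commute)
  ultimately have "x \<notin> R" "y \<notin> R"
    using uniq_resolved_landmark_eq[OF conn] by metis+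
  moreover have "x \<in> V" "y \<in> V"
    using xy by (simp_all add: uniq_resolved_doubleton_iff)
  ultimately show ?thesis
    using xy by blast
qed

theorem lemma10:
  fixes V :: "'a set" and E :: "'a \<Rightarrow> 'a \<Rightarrow> bool"
  assumes conn: "connected_graph V E"
  shows
    "(\<forall>R vs r. R \<subseteq> V \<longrightarrow> colour_cycle V E R vs \<longrightarrow> r \<in> R \<longrightarrow>
        (\<exists>i < length vs. {vs ! i, vs ! ((i + 1) mod length vs)} \<in> uniq_resolved V E R r) \<longrightarrow>
        card {i. i < length vs \<and> {vs ! i, vs ! ((i + 1) mod length vs)} \<in> uniq_resolved V E R r} \<ge> 2)
   \<and> (\<forall>R r x y z. resolving_set V E R \<longrightarrow> r \<in> R \<longrightarrow> x \<in> V \<longrightarrow> y \<in> V \<longrightarrow> z \<in> V \<longrightarrow>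
        x \<noteq> y \<longrightarrow> x \<noteq> z \<longrightarrow> y \<noteq> z \<longrightarrow>
        {x, y} \<in> uniq_resolved V E R r \<longrightarrow> {x, z} \<in> uniq_resolved V E R r \<longrightarrow>
        {y, z} \<in> uniq_resolved V E R r)
   \<and> (\<forall>b R. basis_forced V E b \<longrightarrow> metric_basis V E R \<longrightarrow>
        card (uniq_resolved V E R b) \<ge> 2)
   \<and> (\<forall>b R. basis_forced V E b \<longrightarrow> metric_basis V E R \<longrightarrow>
        (\<exists>x \<in> V - R. \<exists>y \<in> V - R. {x, y} \<in> uniq_resolved V E R b))"
proof (intro conjI allI impI)
  fix R vs r
  assume "colour_cycle V E R vs" "r \<in> R"
    and "\<exists>i < length vs. {vs ! i, vs ! ((i + 1) mod length vs)} \<in> uniq_resolved V E R r"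
  then show "card {i. i < length vs \<and> {vs ! i, vs ! ((i + 1) mod length vs)} \<in> uniq_resolved V E R r} \<ge> 2"
    by (elim exE conjE) (rule colour_cycle_uniq_resolved_edges)
next
  fix R r x y z
  assume "resolving_set V E R" "y \<noteq> z"
    "{x, y} \<in> uniq_resolved V E R r" "{x, z} \<in> uniq_resolved V E R r"
  then show "{y, z} \<in> uniq_resolved V E R r"
    by (rule uniq_resolved_triangle)
next
  fix b R
  assume "basis_forced V E b" "metric_basis V E R"
  then show "card (uniq_resolved V E R b) \<ge> 2"
    by (rule basis_forced_card_uniq_resolved[OF conn])
next
  fix b R
  assume "basis_forced V E b" "metric_basis V E R"
  then show "\<exists>x \<in> V - R. \<exists>y \<in> V - R. {x, y} \<in> uniq_resolved V E R b"
    by (rule basis_forced_uniq_resolved_outside_basis[OF conn])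
qed

end
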